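(* Let $(C,\mathbf A)$, $C\in\mathcal L(\mathcal X,\mathcal Y)$, $\mathbf A\in\mathcal L(\mathcal X)^d$, be an output-stable pair. Then (1) $(C,\mathbf A)$ is also $\mathbf a$-output-stable and $\mathcal G^{\mathbf a}_{C,\mathbf A}\le\mathcal G_{C,\mathbf A}$; (2) equality $\mathcal G^{\mathbf a}_{C,\mathbf A}=\mathcal G_{C,\mathbf A}$ holds if and only if $\mathbf A$ is $C$-abelian, i.e. $C\mathbf A^v=C\mathbf A^u$ whenever $u,v\in\mathcal F_d$ with $\mathbf a(u)=\mathbf a(v)$.
   Context: $\mathcal F_d$: free semigroup of words on $\{1,\dots,d\}$; $\mathbf A^v=A_{i_N}\cdots A_{i_1}$ for $v=i_N\cdots i_1$. Output-stable: $x\mapsto\{C\mathbf A^vx\}_v$ bounded into $\ell^2_{\mathcal Y}(\mathcal F_d)$; $\mathcal G_{C,\mathbf A}=\sum_v(\mathbf A^v)^*C^*C\mathbf A^v$. Abelianization $\mathbf a\colon\mathcal F_d\to\mathbb Z^d_+$: $\mathbf a(i_N\cdots i_1)=(n_1,\dots,n_d)$, $n_k=\#\{\ell:i_\ell=k\}$; $|\mathbf n|=\sum n_k$, $\mathbf n!=\prod n_k!$, $\boldsymbol\lambda^{\mathbf n}=\prod\lambda_k^{n_k}$. Arveson space $\mathcal H_{\mathcal Y}(k_d)$: power series $\sum_{\mathbf n}f_{\mathbf n}\boldsymbol\lambda^{\mathbf n}$ with $\|f\|^2=\sum_{\mathbf n}\frac{\mathbf n!}{|\mathbf n|!}\|f_{\mathbf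 n}\|^2_{\mathcal Y}<\infty$. $(C,\mathbf A)$ is $\mathbf a$-output-stable if $\widehat{\mathcal O}^{\mathbf a}_{C,\mathbf A}\colon x\mapsto\sum_{\mathbf n}\big(\sum_{v\in\mathbf a^{-1}(\mathbf n)}C\mathbf A^vx\big)\boldsymbol\lambda^{\mathbf n}$ is bounded $\mathcal X\to\mathcal H_{\mathcal Y}(k_d)$, and $\mathcal G^{\mathbf a}_{C,\mathbf A}=(\widehat{\mathcal O}^{\mathbf a}_{C,\mathbf A})^*\widehat{\mathcal O}^{\mathbf a}_{C,\mathbf A}$. *)

theory Defs
  imports "HOL-Analysis.Analysis"
begin

text \<open>Letters of the free semigroup are 0,...,d-1 (instead of 1,...,d).
  A word v = i_N ... i_1 is the list [i_N, ..., i_1]; the empty list is the unit word.\<close>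

definition words :: "nat \<Rightarrow> nat list set" where
  "words d = {v. set v \<subseteq> {..<d}}"

primrec opw :: "(nat \<Rightarrow> ('x::real_normed_vector \<Rightarrow>\<^sub>L 'x)) \<Rightarrow> nat list \<Rightarrow> ('x \<Rightarrow>\<^sub>L 'x)" where
  "opw A [] = id_blinfun"
| "opw A (i # v) = A i o\<^sub>L opw A v"

definition abel :: "nat list \<Rightarrow> (nat \<Rightarrow> nat)" where
  "abel v = (\<lambda>k. count_list v k)"

definition multi :: "nat \<Rightarrow> (nat \<Rightarrow> nat) set" where
  "multi d = {n. \<forall>k\<ge>d. n k = 0}"

definition afiber :: "nat \<Rightarrow> (nat \<Rightarrow> nat) \<Rightarrow> nat list set" where
  "afiber d n = {v \<in> words d. abel v = n}"

definition arv_weight :: "nat \<Rightarrow> (nat \<Rightarrow> nat) \<Rightarrow> real" where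
  "arv_weight d n = (\<Prod>k<d. fact (n k)) / fact (\<Sum>k<d. n k)"

definition output_stable ::
  "nat \<Rightarrow> ('x::real_inner \<Rightarrow>\<^sub>L 'y::real_inner) \<Rightarrow> (nat \<Rightarrow> ('x \<Rightarrow>\<^sub>L 'x)) \<Rightarrow> bool" where
  "output_stable d C A \<longleftrightarrow>
     (\<forall>x. (\<lambda>v. (norm (C (opw A v x)))\<^sup>2) summable_on words d) \<and>
     (\<exists>M. \<forall>x. infsum (\<lambda>v. (norm (C (opw A v x)))\<^sup>2) (words d) \<le> M * (norm x)\<^sup>2)"

text \<open>Coefficient of lambda^n in the a-observability series.\<close>
definition acoef ::
  "nat \<Rightarrow> ('x::real_normed_vector \<Rightarrow>\<^sub>L 'y::real_normed_vector) \<Rightarrow> (nat \<Rightarrow> ('x \<Rightarrow>\<^sub>L 'x))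
   \<Rightarrow> (nat \<Rightarrow> nat) \<Rightarrow> 'x \<Rightarrow> 'y" where
  "acoef d C A n x = (\<Sum>v\<in>afiber d n. C (opw A v x))"

definition a_output_stable ::
  "nat \<Rightarrow> ('x::real_inner \<Rightarrow>\<^sub>L 'y::real_inner) \<Rightarrow> (nat \<Rightarrow> ('x \<Rightarrow>\<^sub>L 'x)) \<Rightarrow> bool" where
  "a_output_stable d C A \<longleftrightarrow>
     (\<forall>x. (\<lambda>n. arv_weight d n * (norm (acoef d C A n x))\<^sup>2) summable_on multi d) \<and>
     (\<exists>M. \<forall>x. infsum (\<lambda>n. arv_weight d n * (norm (acoef d C A n x))\<^sup>2) (multi d)
              \<le> M * (norm x)\<^sup>2)"

text \<open>Gramians G = O^* O, characterised as the bounded operator whose bilinear form is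
  <G x, y> = <O x, O y> (inner product of the output space).\<close>
definition gramian ::
  "nat \<Rightarrow> ('x::{real_inner,complete_space} \<Rightarrow>\<^sub>L 'y::{real_inner,complete_space})
   \<Rightarrow> (nat \<Rightarrow> ('x \<Rightarrow>\<^sub>L 'x)) \<Rightarrow> ('x \<Rightarrow>\<^sub>L 'x)" where
  "gramian d C A = (THE G::(_ \<Rightarrow>\<^sub>L _). \<forall>x y. inner (blinfun_apply G x) y =
      infsum (\<lambda>v. inner (C (opw A v x)) (C (opw A v y))) (words d))"

definition a_gramian ::
  "nat \<Rightarrow> ('x::{real_inner,complete_space} \<Rightarrow>\<^sub>L 'y::{real_inner,complete_space})
   \<Rightarrow> (nat \<Rightarrow> ('x \<Rightarrow>\<^sub>L 'x)) \<Rightarrow> ('x \<Rightarrow>\<^sub>L 'x)" where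
  "a_gramian d C A = (THE G::(_ \<Rightarrow>\<^sub>L _). \<forall>x y. inner (blinfun_apply G x) y =
      infsum (\<lambda>n. arv_weight d n * inner (acoef d C A n x) (acoef d C A n y)) (multi d))"

definition op_le :: "('x::real_inner \<Rightarrow>\<^sub>L 'x) \<Rightarrow> ('x \<Rightarrow>\<^sub>L 'x) \<Rightarrow> bool" where
  "op_le G H \<longleftrightarrow> (\<forall>x. inner (G x) x \<le> inner (H x) x)"

definition C_abelian ::
  "nat \<Rightarrow> ('x::real_normed_vector \<Rightarrow>\<^sub>L 'y::real_normed_vector) \<Rightarrow> (nat \<Rightarrow> ('x \<Rightarrow>\<^sub>L 'x)) \<Rightarrow> bool" where
  "C_abelian d C A \<longleftrightarrow>
     (\<forall>u\<in>words d. \<forall>v\<in>words d. abel u = abel v \<longrightarrow> C o\<^sub>L opw A u = C o\<^sub>L opw A v)"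

end

theory Submission
  imports Defs "HOL-Combinatorics.Multiset_Permutations"
begin

text \<open>Group the words by their abelianization. The fibre over a multi-index n consists of the
  permutations of the multiset with multiplicities n, so it has |n|!/n! elements, and the
  Arveson weight is exactly the reciprocal of its size. Hence, fibre by fibre, the
  a-Gramian quadratic form is (1/N) times the squared norm of a sum of N vectors, while the
  Gramian form is the sum of their squared norms: Cauchy-Schwarz gives the inequality, with
  equality exactly when the vectors agree, i.e. when C A^v x depends only on a(v). Both Gramians
  exist as operators by the Riesz representation theorem, which follows by minimising the
  functional |y|^2/2 - f y over the space.\<close>

section \<open>Riesz representation\<close>

lemma Cauchy_if_dist_sq_le_vanishing:
  fixes s :: "nat \<Rightarrow> 'a::metric_space"
  assumes dist_le: "\<And>i j. (dist (s i) (s j))\<^sup>2 \<le> e i + e j" and e: "e \<longlonglongrightarrow> 0"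
  shows "Cauchy s"
proof (rule metric_CauchyI)
  fix r :: real assume "r > 0"
  then have "r\<^sup>2 / 2 > 0" by simp
  with e obtain N where N: "\<And>n. n \<ge> N \<Longrightarrow> \<bar>e n\<bar> < r\<^sup>2 / 2"
    by (metis LIMSEQ_iff real_norm_def diff_zero)
  have "dist (s i) (s j) < r" if "i \<ge> N" "j \<ge> N" for i j
  proof -
    have "(dist (s i) (s j))\<^sup>2 < r\<^sup>2"
      using dist_le[of i j] N[OF that(1)] N[OF that(2)] by linarith
    then show ?thesis using \<open>r > 0\<close> by (simp add: power_less_imp_less_base)
  qed
  then show "\<exists>N. \<forall>i\<ge>N. \<forall>j\<ge>N. dist (s i) (s j) < r" by blast
qed

lemma bounded_linear_energy_attains_min:
  fixes f :: "'a::{real_inner,complete_space} \<Rightarrow> real"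
  assumes "bounded_linear f"
  shows "\<exists>y. \<forall>z. (norm y)\<^sup>2 / 2 - f y \<le> (norm z)\<^sup>2 / 2 - f z"
proof -
  interpret f: bounded_linear f by fact
  define J where "J y = (norm y)\<^sup>2 / 2 - f y" for y
  obtain K where K: "\<And>x. norm (f x) \<le> norm x * K" using f.bounded by blast
  have "- K\<^sup>2 / 2 \<le> J y" for y
    using K[of y] zero_le_power2[of "norm y - K"]
    unfolding J_def by (simp add: power2_diff)
  then have bdd: "bdd_below (range J)" by (intro bdd_belowI) auto
  define m where "m = Inf (range J)"
  have m_le: "m \<le> J y" for y unfolding m_def using bdd by (simp add: cInf_lower)
  have "\<exists>y. J y < m + inverse (Suc k)" for k
    using cInf_lessD[of "range J" "m + inverse (Suc k)"] unfolding m_def by auto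
  then obtain s where s: "\<And>k. J (s k) < m + inverse (Suc k)" by metis
  \<comment> \<open>The parallelogram law turns near-minimality of the midpoint into closeness.\<close>
  have parallelogram: "J a + J b - 2 * J ((1/2) *\<^sub>R (a + b)) = (norm (a - b))\<^sup>2 / 4" for a b
    unfolding J_def power2_norm_eq_inner
    by (simp add: f.add f.scale inner_add_left inner_add_right inner_diff_left inner_diff_right
        inner_commute[of b a] field_simps)
  have "(dist (s i) (s j))\<^sup>2 \<le> 4 * inverse (Suc i) + 4 * inverse (Suc j)" for i j
    using parallelogram[of "s i" "s j"] s[of i] s[of j] m_le[of "(1/2) *\<^sub>R (s i + s j)"]
    by (simp add: dist_norm)
  moreover have "(\<lambda>i. 4 * inverse (real (Suc i))) \<longlonglongrightarrow> 0"
    using tendsto_mult_right_zero[OF LIMSEQ_inverse_real_of_nat] .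
  ultimately have "Cauchy s" by (rule Cauchy_if_dist_sq_le_vanishing)
  then obtain y where "s \<longlonglongrightarrow> y" using Cauchy_convergent_iff convergent_def by blast
  then have "(\<lambda>k. J (s k)) \<longlonglongrightarrow> J y"
    unfolding J_def by (intro tendsto_intros f.tendsto) auto
  moreover have "(\<lambda>k. J (s k)) \<longlonglongrightarrow> m"
  proof (rule tendsto_sandwich[of "\<lambda>_. m" _ _ "\<lambda>k. m + inverse (real (Suc k))"])
    show "(\<lambda>k. m + inverse (real (Suc k))) \<longlonglongrightarrow> m"
      using tendsto_add[OF tendsto_const LIMSEQ_inverse_real_of_nat] by simp
  qed (use m_le s in \<open>auto intro: always_eventually less_imp_le\<close>)
  ultimately have "J y = m" using LIMSEQ_unique by blast
  then show ?thesis using m_le unfolding J_def by metis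
qed

lemma nonneg_linear_quadratic_imp_zero:
  fixes a b :: real
  assumes "\<And>t. 0 \<le> t * a + t\<^sup>2 * b"
  shows "a = 0"
proof -
  define c where "c = 2 * \<bar>b\<bar> + 1"
  have "c > 0" unfolding c_def by simp
  have "c\<^sup>2 * ((- a / c) * a + (- a / c)\<^sup>2 * b) = a\<^sup>2 * (b - c)"
    using \<open>c > 0\<close> by (simp add: field_simps power2_eq_square)
  moreover have "0 \<le> c\<^sup>2 * ((- a / c) * a + (- a / c)\<^sup>2 * b)"
    using assms[of "- a / c"] by simp
  moreover have "b - c < 0" unfolding c_def by linarith
  ultimately have "a\<^sup>2 \<le> 0" by (simp add: mult_le_0_iff zero_le_mult_iff)
  then show ?thesis by simp
qed

lemma riesz_representation:
  fixes f :: "'a::{real_inner,complete_space} \<Rightarrow> real"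
  assumes "bounded_linear f"
  shows "\<exists>y. \<forall>z. f z = inner y z"
proof -
  interpret f: bounded_linear f by fact
  obtain y where y: "\<And>z. (norm y)\<^sup>2 / 2 - f y \<le> (norm z)\<^sup>2 / 2 - f z"
    using bounded_linear_energy_attains_min[OF assms] by blast
  have "inner y z - f z = 0" for z
  proof (rule nonneg_linear_quadratic_imp_zero)
    fix t
    show "0 \<le> t * (inner y z - f z) + t\<^sup>2 * ((norm z)\<^sup>2 / 2)"
      using y[of "y + t *\<^sub>R z"] unfolding power2_norm_eq_inner
      by (simp add: f.add f.scale inner_add_left inner_add_right inner_commute[of z y]
          field_simps power2_eq_square)
  qed
  then show ?thesis by (metis right_minus_eq)
qed

section \<open>Operators representing bounded forms\<close>

lemma bounded_bilinear_form_representation: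
  fixes B :: "'a::{real_inner,complete_space} \<Rightarrow> 'a \<Rightarrow> real"
  assumes "bounded_bilinear B"
  shows "\<exists>!G::'a \<Rightarrow>\<^sub>L 'a. \<forall>x y. inner (G x) y = B x y"
proof -
  interpret B: bounded_bilinear B by fact
  obtain K where "K \<ge> 0" and K: "\<And>x y. norm (B x y) \<le> norm x * norm y * K"
    using B.nonneg_bounded by blast
  have "\<exists>g. \<forall>z. B x z = inner g z" for x
    using riesz_representation[OF B.bounded_linear_right] .
  then obtain g where g: "\<And>x z. B x z = inner (g x) z" by metis
  have "norm (g x) \<le> norm x * K" for x
  proof (cases "g x = 0")
    case False
    have "norm (g x) * norm (g x) = B x (g x)"
      by (simp add: g power2_norm_eq_inner[symmetric] power2_eq_square)
    also have "\<dots> \<le> (norm x * K) * norm (g x)" using K[of x "g x"] by (simp add: ac_simps)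
    finally show ?thesis using False by simp
  qed (use \<open>K \<ge> 0\<close> in simp)
  moreover have "g (x + y) = g x + g y" "g (c *\<^sub>R x) = c *\<^sub>R g x" for x y c
    by (simp_all add: g[symmetric] inner_add_left B.add_left B.scaleR_left
        flip: vector_eq_rdot[where 'a='a])
  ultimately have "bounded_linear g" by (intro bounded_linear_intro)
  then have G: "\<forall>x y. inner (Blinfun g x) y = B x y" by (simp add: bounded_linear_Blinfun_apply g)
  show ?thesis
  proof (rule ex1I[of _ "Blinfun g"])
    fix G' :: "'a \<Rightarrow>\<^sub>L 'a" assume "\<forall>x y. inner (G' x) y = B x y"
    with G show "G' = Blinfun g" by (intro blinfun_eqI) (simp flip: vector_eq_rdot[where 'a='a])
  qed (fact G)
qed

lemma bounded_bilinear_if_nonneg_form_bound: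
  fixes B :: "'a::real_normed_vector \<Rightarrow> 'a \<Rightarrow> real"
  assumes bil: "bilinear B" and sym: "\<And>x y. B x y = B y x" and nonneg: "\<And>x. 0 \<le> B x x"
    and bound: "\<And>x. B x x \<le> M * (norm x)\<^sup>2"
  shows "bounded_bilinear B"
proof -
  have half_sum: "2 * \<bar>B x y\<bar> \<le> B x x + B y y" for x y
    using nonneg[of "x + y"] nonneg[of "x - y"] sym[of y x]
    by (simp add: bilinear_ladd[OF bil] bilinear_radd[OF bil] bilinear_lsub[OF bil]
        bilinear_rsub[OF bil] abs_le_iff)
  have "\<bar>B x y\<bar> \<le> norm x * norm y * M" for x y
  proof (cases "x = 0 \<or> y = 0")
    case True
    then show ?thesis by (auto simp: bilinear_lzero[OF bil] bilinear_rzero[OF bil])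
  next
    case False
    define u v where "u = (1 / norm x) *\<^sub>R x" and "v = (1 / norm y) *\<^sub>R y"
    have "norm u = 1" "norm v = 1" using False by (simp_all add: u_def v_def)
    then have "\<bar>B u v\<bar> \<le> M" using half_sum[of u v] bound[of u] bound[of v] by simp
    moreover have "B x y = norm x * norm y * B u v"
      using False by (simp add: u_def v_def bilinear_lmul[OF bil] bilinear_rmul[OF bil])
    ultimately show ?thesis by (simp add: abs_mult mult_left_mono)
  qed
  then show ?thesis
    using bil by unfold_locales
      (auto simp: bilinear_ladd bilinear_radd bilinear_lmul bilinear_rmul)
qed

lemma summable_on_weighted_inner:
  fixes a b :: "'i \<Rightarrow> 'z::real_inner"
  assumes w: "\<And>i. i \<in> S \<Longrightarrow> 0 \<le> w i"
    and a: "(\<lambda>i. w i * (norm (a i))\<^sup>2) summable_on S"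
    and b: "(\<lambda>i. w i * (norm (b i))\<^sup>2) summable_on S"
  shows "(\<lambda>i. w i * inner (a i) (b i)) summable_on S"
proof (rule abs_summable_summable)
  have "(\<lambda>i. w i * (norm (a i))\<^sup>2 + w i * (norm (b i))\<^sup>2) summable_on S"
    using a b by (rule summable_on_add)
  then have "(\<lambda>i. norm (w i * (norm (a i))\<^sup>2 + w i * (norm (b i))\<^sup>2)) summable_on S"
    by (rule summable_on_iff_abs_summable_on_real[THEN iffD1])
  then show "(\<lambda>i. norm (w i * inner (a i) (b i))) summable_on S"
  proof (rule Infinite_Sum.abs_summable_on_comparison_test)
    fix i assume "i \<in> S"
    have "\<bar>inner (a i) (b i)\<bar> \<le> (norm (a i))\<^sup>2 + (norm (b i))\<^sup>2"
      using Cauchy_Schwarz_ineq2[of "a i" "b i"] zero_le_power2[of "norm (a i) - norm (b i)"]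
        mult_nonneg_nonneg[OF norm_ge_zero norm_ge_zero, of "a i" "b i"]
      unfolding power2_diff by linarith
    then have "\<bar>w i * inner (a i) (b i)\<bar> \<le> w i * ((norm (a i))\<^sup>2 + (norm (b i))\<^sup>2)"
      using w[OF \<open>i \<in> S\<close>] by (simp add: abs_mult mult_left_mono)
    then show "norm (w i * inner (a i) (b i)) \<le> norm (w i * (norm (a i))\<^sup>2 + w i * (norm (b i))\<^sup>2)"
      using w[OF \<open>i \<in> S\<close>] by (simp add: distrib_left)
  qed
qed

lemma ex1_operator_weighted_infsum_inner:
  fixes L :: "'i \<Rightarrow> 'x::{real_inner,complete_space} \<Rightarrow> 'z::real_inner"
  assumes lin: "\<And>i. linear (L i)" and w: "\<And>i. i \<in> S \<Longrightarrow> 0 \<le> w i"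
    and summable: "\<And>x. (\<lambda>i. w i * (norm (L i x))\<^sup>2) summable_on S"
    and bound: "\<And>x. (\<Sum>\<^sub>\<infinity>i\<in>S. w i * (norm (L i x))\<^sup>2) \<le> M * (norm x)\<^sup>2"
  shows "\<exists>!G::'x \<Rightarrow>\<^sub>L 'x. \<forall>x y. inner (G x) y = (\<Sum>\<^sub>\<infinity>i\<in>S. w i * inner (L i x) (L i y))"
proof -
  define B where "B x y = (\<Sum>\<^sub>\<infinity>i\<in>S. w i * inner (L i x) (L i y))" for x y
  have sum: "(\<lambda>i. w i * inner (L i x) (L i y)) summable_on S" for x y
    using summable_on_weighted_inner[OF w summable summable] .
  have sym: "B x y = B y x" for x y
    unfolding B_def by (simp add: inner_commute)
  have left: "linear (\<lambda>x. B x y)" for y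
  proof (rule linearI)
    show "B (x + x') y = B x y + B x' y" for x x'
      unfolding B_def using lin
      by (simp add: linear_add inner_add_left distrib_left infsum_add[OF sum sum])
    show "B (c *\<^sub>R x) y = c *\<^sub>R B x y" for c x
      unfolding B_def using lin
      by (simp add: linear_scale mult.left_commute[of _ c] infsum_cmult_right')
  qed
  moreover have "B x = (\<lambda>y. B y x)" for x
    using sym by auto
  ultimately have bil: "bilinear B"
    unfolding bilinear_def by metis
  have "0 \<le> B x x" for x
    unfolding B_def by (intro infsum_nonneg) (simp add: w)
  moreover have "B x x \<le> M * (norm x)\<^sup>2" for x
    using bound[of x] by (simp add: B_def power2_norm_eq_inner)
  ultimately have "bounded_bilinear B"
    using bounded_bilinear_if_nonneg_form_bound[OF bil sym] by blast
  then show ?thesis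
    unfolding B_def by (rule bounded_bilinear_form_representation)
qed

section \<open>Fibres of the abelianization\<close>

definition multiindex_mset :: "nat \<Rightarrow> (nat \<Rightarrow> nat) \<Rightarrow> nat multiset" where
  "multiindex_mset d n = (\<Sum>k<d. replicate_mset (n k) k)"

lemma count_multiindex_mset [simp]:
  "n \<in> multi d \<Longrightarrow> count (multiindex_mset d n) = n"
  by (auto simp: multiindex_mset_def count_sum multi_def not_le)

lemma size_multiindex_mset: "size (multiindex_mset d n) = (\<Sum>k<d. n k)"
  by (induction d) (simp_all add: multiindex_mset_def)

lemma set_mset_multiindex_mset: "set_mset (multiindex_mset d n) \<subseteq> {..<d}"
  by (induction d) (auto simp: multiindex_mset_def)

lemma abel_eq_count_mset: "abel v = count (mset v)"
  by (simp add: abel_def fun_eq_iff count_mset)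

lemma abel_in_multi: "v \<in> words d \<Longrightarrow> abel v \<in> multi d"
  by (auto simp: words_def abel_def multi_def count_list_0_iff)

lemma afiber_eq_permutations_of_multiset:
  assumes "n \<in> multi d"
  shows "afiber d n = permutations_of_multiset (multiindex_mset d n)"
proof -
  have "set v \<subseteq> {..<d}" if "mset v = multiindex_mset d n" for v
    using that set_mset_multiindex_mset by (metis set_mset_mset)
  then show ?thesis
    using assms
    by (auto simp: afiber_def words_def permutations_of_multiset_def abel_eq_count_mset
        simp flip: count_inject)
qed

lemma afiber_eq_empty: "n \<notin> multi d \<Longrightarrow> afiber d n = {}"
  using abel_in_multi by (auto simp: afiber_def)

lemma finite_afiber: "finite (afiber d n)"
  by (cases "n \<in> multi d") (simp_all add: afiber_eq_permutations_of_multiset afiber_eq_empty)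

lemma arv_weight_nonneg: "0 \<le> arv_weight d n"
  unfolding arv_weight_def by (intro divide_nonneg_nonneg prod_nonneg) auto

lemma arv_weight_mult_card_afiber:
  assumes "n \<in> multi d"
  shows "arv_weight d n * card (afiber d n) = 1"
proof -
  let ?M = "multiindex_mset d n"
  have "(\<Prod>k\<in>set_mset ?M. fact (count ?M k)) = (\<Prod>k<d. fact (count ?M k) :: nat)"
  proof (rule prod.mono_neutral_left)
    show "\<forall>k\<in>{..<d} - set_mset ?M. fact (count ?M k) = (1::nat)"
      by (metis DiffD2 count_eq_zero_iff fact_0)
  qed (simp_all add: set_mset_multiindex_mset)
  then have "card (afiber d n) * (\<Prod>k<d. fact (n k)) = (fact (\<Sum>k<d. n k) :: nat)"
    using card_permutations_of_multiset_aux[of ?M]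
    by (simp add: afiber_eq_permutations_of_multiset[OF assms] size_multiindex_mset assms)
  then have "real (card (afiber d n) * (\<Prod>k<d. fact (n k))) = fact (\<Sum>k<d. n k)"
    by (metis of_nat_fact)
  then have "real (card (afiber d n)) * (\<Prod>k<d. fact (n k)) = fact (\<Sum>k<d. n k)"
    by (simp add: of_nat_prod)
  then show ?thesis
    unfolding arv_weight_def by (simp add: field_simps)
qed

lemma bij_betw_snd_Sigma_afiber: "bij_betw snd (Sigma (multi d) (afiber d)) (words d)"
  by (auto simp: bij_betw_def inj_on_def afiber_def abel_in_multi image_iff)

lemma has_sum_words_by_afiber:
  fixes f :: "nat list \<Rightarrow> 'b::real_normed_vector"
  assumes "(f has_sum s) (words d)"
  shows "((\<lambda>n. \<Sum>v\<in>afiber d n. f v) has_sum s) (multi d)"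
proof (rule has_sum_SigmaD[where f = "\<lambda>(n, v). f v"])
  show "((\<lambda>(n, v). f v) has_sum s) (Sigma (multi d) (afiber d))"
    using has_sum_reindex_bij_betw[OF bij_betw_snd_Sigma_afiber, of f] assms
    by (simp add: case_prod_unfold)
qed (simp add: finite_afiber)

section \<open>Cauchy-Schwarz on a finite set\<close>

lemma sum_sum_norm_diff_sq:
  fixes a :: "'i \<Rightarrow> 'z::real_inner"
  assumes "finite F"
  shows "(\<Sum>u\<in>F. \<Sum>v\<in>F. (norm (a u - a v))\<^sup>2) =
         2 * (card F * (\<Sum>v\<in>F. (norm (a v))\<^sup>2) - (norm (\<Sum>v\<in>F. a v))\<^sup>2)"
proof -
  have "(norm (\<Sum>v\<in>F. a v))\<^sup>2 = (\<Sum>u\<in>F. \<Sum>v\<in>F. inner (a u) (a v))"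
    by (simp add: power2_norm_eq_inner inner_sum_left inner_sum_right) (rule sum.swap)
  moreover have "(norm (a u - a v))\<^sup>2 = (norm (a u))\<^sup>2 + (norm (a v))\<^sup>2 - 2 * inner (a u) (a v)" for u v
    by (simp add: power2_norm_eq_inner inner_diff_left inner_diff_right inner_commute)
  ultimately show ?thesis
    using assms by (simp add: sum.distrib sum_subtractf sum_distrib_left)
qed

lemma norm_sum_sq_le_card_mult:
  fixes a :: "'i \<Rightarrow> 'z::real_inner"
  shows "(norm (\<Sum>v\<in>F. a v))\<^sup>2 \<le> card F * (\<Sum>v\<in>F. (norm (a v))\<^sup>2)"
proof (cases "finite F")
  case True
  have "0 \<le> (\<Sum>u\<in>F. \<Sum>v\<in>F. (norm (a u - a v))\<^sup>2)" by (intro sum_nonneg) simp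
  then show ?thesis unfolding sum_sum_norm_diff_sq[OF True] by simp
qed simp

lemma norm_sum_sq_eq_card_mult_imp_eq:
  fixes a :: "'i \<Rightarrow> 'z::real_inner"
  assumes "finite F" and "(norm (\<Sum>v\<in>F. a v))\<^sup>2 = card F * (\<Sum>v\<in>F. (norm (a v))\<^sup>2)"
    and "u \<in> F" "v \<in> F"
  shows "a u = a v"
proof -
  have "(\<Sum>u\<in>F. \<Sum>v\<in>F. (norm (a u - a v))\<^sup>2) = 0"
    using assms(2) unfolding sum_sum_norm_diff_sq[OF assms(1)] by simp
  then have "\<forall>u\<in>F. (\<Sum>v\<in>F. (norm (a u - a v))\<^sup>2) = 0"
    by (intro sum_nonneg_eq_0_iff[OF assms(1), THEN iffD1]) (simp_all add: sum_nonneg)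
  then have "\<forall>v\<in>F. (norm (a u - a v))\<^sup>2 = 0"
    using assms(3) by (intro sum_nonneg_eq_0_iff[OF assms(1), THEN iffD1]) simp_all
  then show ?thesis
    using assms(4) by simp
qed

lemma inner_sum_sum_if_const:
  fixes a b :: "'i \<Rightarrow> 'z::real_inner"
  assumes "\<And>u v. u \<in> F \<Longrightarrow> v \<in> F \<Longrightarrow> a u = a v \<and> b u = b v"
  shows "inner (\<Sum>v\<in>F. a v) (\<Sum>v\<in>F. b v) = card F * (\<Sum>v\<in>F. inner (a v) (b v))"
proof (cases "F = {}")
  case False
  then obtain v0 where "v0 \<in> F" by blast
  with assms have "a v = a v0" "b v = b v0" if "v \<in> F" for v
    using that by blast+
  then show ?thesis by (simp add: sum_constant_scaleR cong: sum.cong)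
qed simp

section \<open>Gramians\<close>

definition fiber_defect ::
  "nat \<Rightarrow> ('x::real_normed_vector \<Rightarrow>\<^sub>L 'y::real_inner) \<Rightarrow> (nat \<Rightarrow> ('x \<Rightarrow>\<^sub>L 'x))
   \<Rightarrow> 'x \<Rightarrow> (nat \<Rightarrow> nat) \<Rightarrow> real" where
  "fiber_defect d C A x n =
     (\<Sum>v\<in>afiber d n. (norm (C (opw A v x)))\<^sup>2) - arv_weight d n * (norm (acoef d C A n x))\<^sup>2"

lemma bounded_linear_C_opw:
  fixes C :: "'x::real_normed_vector \<Rightarrow>\<^sub>L 'y::real_normed_vector"
  shows "bounded_linear (\<lambda>x. C (opw A v x))"
  by (rule bounded_linear_compose[OF blinfun.bounded_linear_right blinfun.bounded_linear_right])

lemma bounded_linear_acoef: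
  fixes C :: "'x::real_normed_vector \<Rightarrow>\<^sub>L 'y::real_normed_vector"
  shows "bounded_linear (acoef d C A n)"
  unfolding acoef_def[abs_def] by (intro bounded_linear_sum bounded_linear_C_opw)

lemma fiber_defect_nonneg:
  fixes C :: "'x::real_normed_vector \<Rightarrow>\<^sub>L 'y::real_inner"
  shows "0 \<le> fiber_defect d C A x n"
proof (cases "n \<in> multi d")
  case True
  have "arv_weight d n * (norm (acoef d C A n x))\<^sup>2
        \<le> arv_weight d n * (real (card (afiber d n)) * (\<Sum>v\<in>afiber d n. (norm (C (opw A v x)))\<^sup>2))"
    unfolding acoef_def by (intro mult_left_mono norm_sum_sq_le_card_mult arv_weight_nonneg)
  then show ?thesis
    by (simp add: fiber_defect_def arv_weight_mult_card_afiber[OF True] flip: mult.assoc)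
qed (simp add: fiber_defect_def afiber_eq_empty acoef_def)

lemma C_opw_eq_if_fiber_defect_eq_0:
  fixes C :: "'x::real_normed_vector \<Rightarrow>\<^sub>L 'y::real_inner"
  assumes "fiber_defect d C A x n = 0" and "u \<in> afiber d n" "v \<in> afiber d n"
  shows "C (opw A u x) = C (opw A v x)"
proof (rule norm_sum_sq_eq_card_mult_imp_eq[where a = "\<lambda>v. C (opw A v x)",
      OF finite_afiber _ assms(2,3)])
  have "n \<in> multi d"
    using assms(2) abel_in_multi by (auto simp: afiber_def)
  then have "real (card (afiber d n)) * arv_weight d n = 1"
    using arv_weight_mult_card_afiber by (simp add: mult.commute)
  then show "(norm (\<Sum>v\<in>afiber d n. C (opw A v x)))\<^sup>2
             = real (card (afiber d n)) * (\<Sum>v\<in>afiber d n. (norm (C (opw A v x)))\<^sup>2)"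
    using assms(1) by (simp add: fiber_defect_def acoef_def flip: mult.assoc)
qed

lemma arv_weight_inner_acoef_if_C_abelian:
  fixes C :: "'x::real_normed_vector \<Rightarrow>\<^sub>L 'y::real_inner"
  assumes "C_abelian d C A"
  shows "arv_weight d n * inner (acoef d C A n x) (acoef d C A n y)
         = (\<Sum>v\<in>afiber d n. inner (C (opw A v x)) (C (opw A v y)))"
proof (cases "n \<in> multi d")
  case True
  have "C (opw A u z) = C (opw A v z)" if "u \<in> afiber d n" "v \<in> afiber d n" for u v z
  proof -
    have "C o\<^sub>L opw A u = C o\<^sub>L opw A v"
      using assms that by (auto simp: C_abelian_def afiber_def)
    then have "(C o\<^sub>L opw A u) z = (C o\<^sub>L opw A v) z" by simp
    then show ?thesis by simp
  qed
  then have "inner (acoef d C A n x) (acoef d C A n y)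
             = real (card (afiber d n)) * (\<Sum>v\<in>afiber d n. inner (C (opw A v x)) (C (opw A v y)))"
    unfolding acoef_def by (intro inner_sum_sum_if_const) blast
  then show ?thesis
    by (simp add: arv_weight_mult_card_afiber[OF True] flip: mult.assoc)
qed (simp add: afiber_eq_empty acoef_def)

lemma has_sum_fiber_energy:
  assumes "output_stable d C A"
  shows "((\<lambda>n. \<Sum>v\<in>afiber d n. (norm (C (opw A v x)))\<^sup>2) has_sum
          (\<Sum>\<^sub>\<infinity>v\<in>words d. (norm (C (opw A v x)))\<^sup>2)) (multi d)"
  using assms by (intro has_sum_words_by_afiber) (simp add: output_stable_def)

lemma a_output_stable_if_output_stable:
  assumes "output_stable d C A"
  shows "a_output_stable d C A"
proof -
  obtain M where M: "\<And>x. (\<Sum>\<^sub>\<infinity>v\<in>words d. (norm (C (opw A v x)))\<^sup>2) \<le> M * (norm x)\<^sup>2"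
    using assms unfolding output_stable_def by blast
  have le: "arv_weight d n * (norm (acoef d C A n x))\<^sup>2 \<le> (\<Sum>v\<in>afiber d n. (norm (C (opw A v x)))\<^sup>2)"
    for n x
    using fiber_defect_nonneg[of d C A x n] by (simp add: fiber_defect_def)
  have nonneg: "0 \<le> arv_weight d n * (norm (acoef d C A n x))\<^sup>2" for n x
    by (simp add: arv_weight_nonneg)
  have summable: "(\<lambda>n. arv_weight d n * (norm (acoef d C A n x))\<^sup>2) summable_on multi d" for x
    by (rule summable_on_comparison_test[OF has_sum_imp_summable[OF has_sum_fiber_energy[OF assms]]
          le nonneg])
  have "(\<Sum>\<^sub>\<infinity>n\<in>multi d. arv_weight d n * (norm (acoef d C A n x))\<^sup>2) \<le> M * (norm x)\<^sup>2" for x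
    using has_sum_mono[OF has_sum_infsum[OF summable] has_sum_fiber_energy[OF assms] le] M[of x]
    by (rule order_trans)
  with summable show ?thesis
    unfolding a_output_stable_def by blast
qed

lemma inner_gramian:
  fixes C :: "'x::{real_inner,complete_space} \<Rightarrow>\<^sub>L 'y::{real_inner,complete_space}"
  assumes "output_stable d C A"
  shows "inner (gramian d C A x) y = (\<Sum>\<^sub>\<infinity>v\<in>words d. inner (C (opw A v x)) (C (opw A v y)))"
proof -
  obtain M where "\<And>x. (\<lambda>v. (norm (C (opw A v x)))\<^sup>2) summable_on words d"
    and "\<And>x. (\<Sum>\<^sub>\<infinity>v\<in>words d. (norm (C (opw A v x)))\<^sup>2) \<le> M * (norm x)\<^sup>2"
    using assms unfolding output_stable_def by blast
  then have "\<exists>!G::'x \<Rightarrow>\<^sub>L 'x. \<forall>x y. inner (G x) y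
               = (\<Sum>\<^sub>\<infinity>v\<in>words d. 1 * inner (C (opw A v x)) (C (opw A v y)))"
    by (intro ex1_operator_weighted_infsum_inner[where M = M] bounded_linear.linear
        bounded_linear_C_opw) simp_all
  from theI'[OF this[simplified]] show ?thesis
    unfolding gramian_def by blast
qed

lemma inner_a_gramian:
  fixes C :: "'x::{real_inner,complete_space} \<Rightarrow>\<^sub>L 'y::{real_inner,complete_space}"
  assumes "a_output_stable d C A"
  shows "inner (a_gramian d C A x) y
         = (\<Sum>\<^sub>\<infinity>n\<in>multi d. arv_weight d n * inner (acoef d C A n x) (acoef d C A n y))"
proof -
  obtain M where "\<And>x. (\<lambda>n. arv_weight d n * (norm (acoef d C A n x))\<^sup>2) summable_on multi d"
    and "\<And>x. (\<Sum>\<^sub>\<infinity>n\<in>multi d. arv_weight d n * (norm (acoef d C A n x))\<^sup>2) \<le> M * (norm x)\<^sup>2"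
    using assms unfolding a_output_stable_def by blast
  then have "\<exists>!G::'x \<Rightarrow>\<^sub>L 'x. \<forall>x y. inner (G x) y
               = (\<Sum>\<^sub>\<infinity>n\<in>multi d. arv_weight d n * inner (acoef d C A n x) (acoef d C A n y))"
    by (intro ex1_operator_weighted_infsum_inner[where M = M] bounded_linear.linear
        bounded_linear_acoef arv_weight_nonneg)
  from theI'[OF this] show ?thesis
    unfolding a_gramian_def by blast
qed

lemma has_sum_fiber_defect:
  assumes "output_stable d C A"
  shows "(fiber_defect d C A x has_sum
            (inner (gramian d C A x) x - inner (a_gramian d C A x) x)) (multi d)"
proof -
  have "((\<lambda>n. \<Sum>v\<in>afiber d n. (norm (C (opw A v x)))\<^sup>2) has_sum inner (gramian d C A x) x) (multi d)"
    using has_sum_fiber_energy[OF assms] by (simp add: inner_gramian[OF assms] power2_norm_eq_inner)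
  moreover have "((\<lambda>n. arv_weight d n * (norm (acoef d C A n x))\<^sup>2) has_sum inner (a_gramian d C A x) x)
                 (multi d)"
    using a_output_stable_if_output_stable[OF assms]
    by (simp add: inner_a_gramian a_output_stable_def power2_norm_eq_inner)
  ultimately show ?thesis
    unfolding fiber_defect_def diff_conv_add_uminus by (intro has_sum_add has_sum_uminusI)
qed

lemma a_gramian_le_gramian:
  assumes "output_stable d C A"
  shows "op_le (a_gramian d C A) (gramian d C A)"
  unfolding op_le_def
  using has_sum_nonneg[OF has_sum_fiber_defect[OF assms] fiber_defect_nonneg] by simp

lemma C_abelian_if_a_gramian_eq_gramian:
  assumes "output_stable d C A" and "a_gramian d C A = gramian d C A"
  shows "C_abelian d C A"
  unfolding C_abelian_def
proof (intro ballI impI blinfun_eqI)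
  fix u v x assume "u \<in> words d" "v \<in> words d" "abel u = abel v"
  then have fibers: "u \<in> afiber d (abel u)" "v \<in> afiber d (abel u)"
    by (simp_all add: afiber_def)
  have "(fiber_defect d C A x has_sum 0) (multi d)"
    using has_sum_fiber_defect[OF assms(1)] assms(2) by simp
  then have "fiber_defect d C A x (abel u) = 0"
    using fiber_defect_nonneg abel_in_multi[OF \<open>u \<in> words d\<close>]
    by (rule nonneg_has_sum_le_0D[OF _ order_refl])
  then show "(C o\<^sub>L opw A u) x = (C o\<^sub>L opw A v) x"
    using C_opw_eq_if_fiber_defect_eq_0[OF _ fibers] by simp
qed

lemma a_gramian_eq_gramian_if_C_abelian:
  assumes "output_stable d C A" and "C_abelian d C A"
  shows "a_gramian d C A = gramian d C A"
proof (rule blinfun_eqI, rule vector_eq_rdot[THEN iffD1], intro allI)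
  fix x y
  have "(\<lambda>v. 1 * inner (C (opw A v x)) (C (opw A v y))) summable_on words d"
    using assms(1) by (intro summable_on_weighted_inner) (simp_all add: output_stable_def)
  then have "((\<lambda>n. \<Sum>v\<in>afiber d n. inner (C (opw A v x)) (C (opw A v y))) has_sum
               inner (gramian d C A x) y) (multi d)"
    by (simp add: inner_gramian[OF assms(1)] has_sum_words_by_afiber)
  then show "inner (a_gramian d C A x) y = inner (gramian d C A x) y"
    by (simp add: inner_a_gramian[OF a_output_stable_if_output_stable[OF assms(1)]]
        arv_weight_inner_acoef_if_C_abelian[OF assms(2)] infsumI)
qed

theorem proposition3p8:
  fixes d :: nat
    and C :: "'x::{real_inner,complete_space} \<Rightarrow>\<^sub>L 'y::{real_inner,complete_space}"
    and A :: "nat \<Rightarrow> ('x \<Rightarrow>\<^sub>L 'x)"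
  assumes "output_stable d C A"
  shows "(a_output_stable d C A \<and> op_le (a_gramian d C A) (gramian d C A)) \<and>
         (a_gramian d C A = gramian d C A \<longleftrightarrow> C_abelian d C A)"
  using a_output_stable_if_output_stable[OF assms] a_gramian_le_gramian[OF assms]
    C_abelian_if_a_gramian_eq_gramian[OF assms] a_gramian_eq_gramian_if_C_abelian[OF assms]
  by blast

end
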